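(* Let $X$ be a topological space with $|X|\ge 2$, $G$ an infinite Abelian group, and $f\colon G\to X$ a Korovin mapping. Then the Korovin orbit $G_f$ is a $T_3$-space if and only if $X$ is a $T_3$-space.
   Context: $X^G$ carries the product topology. For $f\in X^G$ and $g\in G$ let $gf\in X^G$ be given by $(gf)(x)=f(xg)$, and let $G_f=\{gf:g\in G\}\subseteq X^G$ with the subspace topology. The map $f\colon G\to X$ is a Korovin mapping if $\pi_M(G_f)=X^M$ for every countable $M\subseteq G$, where $\pi_M\colon X^G\to X^M$ is the projection; in that case $G_f$ is called a Korovin orbit. A space is $T_3$ if every open neighborhood $U$ of a point $x$ contains an open neighborhood $V$ of $x$ with $\overline{V}\subseteq U$ (no $T_1$ assumed). *)

theory Defs
  imports "HOL-Analysis.Analysis"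
begin

text \<open>The group G is written additively (type class ab_group_add); the action is
  (g f)(x) = f(x + g).\<close>

definition shift_fun :: "'g::ab_group_add \<Rightarrow> ('g \<Rightarrow> 'a) \<Rightarrow> ('g \<Rightarrow> 'a)" where
  "shift_fun g f = (\<lambda>x. f (x + g))"

definition orbit_set :: "('g::ab_group_add \<Rightarrow> 'a) \<Rightarrow> ('g \<Rightarrow> 'a) set" where
  "orbit_set f = {shift_fun g f | g. True}"

definition orbit_space :: "'a topology \<Rightarrow> ('g::ab_group_add \<Rightarrow> 'a) \<Rightarrow> ('g \<Rightarrow> 'a) topology" where
  "orbit_space X f = subtopology (product_topology (\<lambda>_. X) UNIV) (orbit_set f)"

definition korovin_mapping :: "'a topology \<Rightarrow> ('g::ab_group_add \<Rightarrow> 'a) \<Rightarrow> bool" where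
  "korovin_mapping X f \<longleftrightarrow> (\<forall>x. f x \<in> topspace X) \<and>
     (\<forall>M. countable M \<longrightarrow> (\<lambda>h. restrict h M) ` orbit_set f = PiE M (\<lambda>_. topspace X))"

text \<open>T_3 (no T_1 assumed): every open neighbourhood of a point contains an open
  neighbourhood whose closure lies inside it.\<close>
definition T3_space :: "'a topology \<Rightarrow> bool" where
  "T3_space X \<longleftrightarrow> (\<forall>x U. openin X U \<and> x \<in> U \<longrightarrow>
      (\<exists>V. openin X V \<and> x \<in> V \<and> X closure_of V \<subseteq> U))"

end

theory Submission
  imports Defs
begin

text \<open>Regularity is inherited by products and subspaces, which gives one direction. For the
  other, the only property of S = G_f that matters is that every assignment of values at finitely
  many coordinates is realised by a point of S. Such an S is dense in X^G, so the closure in S of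
  the trace of an open box \<Pi> B_i is the trace of \<Pi> cl B_i. Given x in an open U, take p in S
  with p 0 = x and a box around p whose trace has its S-closure inside {h. h 0 \<in> U}. Any y in
  cl B_0 is the 0-th coordinate of a point of S agreeing with p at the finitely many other
  constrained coordinates; that point lies in the trace of \<Pi> cl B_i, so y \<in> U.\<close>

lemma T3_space_iff_regular_space: "T3_space X \<longleftrightarrow> regular_space X"
proof -
  have "T3_space X \<longleftrightarrow> neighbourhood_base_of (closedin X) X"
    unfolding neighbourhood_base_of T3_space_def
    by (meson closedin_closure_of closure_of_minimal closure_of_subset openin_subset order_trans)
  then show ?thesis
    by (simp add: neighbourhood_base_of_closedin)
qed

definition finitely_full :: "('i \<Rightarrow> 'a topology) \<Rightarrow> 'i set \<Rightarrow> ('i \<Rightarrow> 'a) set \<Rightarrow> bool" where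
  "finitely_full X I S \<longleftrightarrow>
     (\<forall>M t. finite M \<and> M \<subseteq> I \<and> (\<forall>i\<in>M. t i \<in> topspace (X i)) \<longrightarrow> (\<exists>h\<in>S. \<forall>i\<in>M. h i = t i))"

lemma finitely_full_imp_dense:
  assumes full: "finitely_full X I S" and S: "S \<subseteq> topspace (product_topology X I)"
  shows "product_topology X I closure_of S = topspace (product_topology X I)"
  unfolding dense_intersects_open
proof (intro allI impI)
  fix T
  assume T: "openin (product_topology X I) T \<and> T \<noteq> {}"
  then obtain x where "x \<in> T" by blast
  then obtain U where U: "finite {i \<in> I. U i \<noteq> topspace (X i)}" "x \<in> Pi\<^sub>E I U" "Pi\<^sub>E I U \<subseteq> T"
    using T unfolding openin_product_topology_alt by blast
  have "x i \<in> topspace (X i)" if "i \<in> I" for i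
    using that \<open>x \<in> T\<close> openin_subset [of _ T] T by fastforce
  then obtain h where "h \<in> S" and h: "\<forall>i \<in> {i \<in> I. U i \<noteq> topspace (X i)}. h i = x i"
    using full U(1) unfolding finitely_full_def by (metis (no_types, lifting) mem_Collect_eq subsetI)
  moreover have "h \<in> Pi\<^sub>E I U"
    using h \<open>h \<in> S\<close> S U(2) by (force simp: PiE_iff)
  ultimately show "S \<inter> T \<noteq> {}"
    using U(3) by blast
qed

lemma closure_of_dense_subtopology_Int_open:
  assumes "X closure_of S = topspace X" and "openin X T"
  shows "subtopology X S closure_of (S \<inter> T) = S \<inter> X closure_of T"
  using assms closure_of_openin_Int_superset [of X T S]
  by (simp add: closure_of_subtopology openin_subset Int_commute)

lemma closure_of_box_in_finitely_full:
  assumes full: "finitely_full X I S" and S: "S \<subseteq> topspace (product_topology X I)"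
    and B: "finite {i \<in> I. B i \<noteq> topspace (X i)}" "\<forall>i\<in>I. openin (X i) (B i)"
  shows "subtopology (product_topology X I) S closure_of (S \<inter> Pi\<^sub>E I B)
           = S \<inter> Pi\<^sub>E I (\<lambda>i. X i closure_of B i)"
proof -
  have "openin (product_topology X I) (Pi\<^sub>E I B)"
    using B unfolding openin_product_topology_alt by blast
  then show ?thesis
    unfolding closure_of_product_topology [symmetric]
    by (rule closure_of_dense_subtopology_Int_open [OF finitely_full_imp_dense [OF full S]])
qed

lemma finitely_full_move_coordinate_in_closure:
  assumes full: "finitely_full X I S" and S: "S \<subseteq> topspace (product_topology X I)"
    and B: "finite {i \<in> I. B i \<noteq> topspace (X i)}" "\<forall>i\<in>I. openin (X i) (B i)"
    and "p \<in> S" "p \<in> Pi\<^sub>E I B" "k \<in> I" and y: "y \<in> X k closure_of B k"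
  obtains q where "q \<in> S" "q \<in> Pi\<^sub>E I (\<lambda>i. X i closure_of B i)" "q k = y"
proof -
  define M where "M = insert k {i \<in> I. B i \<noteq> topspace (X i)}"
  have "(p(k := y)) i \<in> topspace (X i)" if "i \<in> M" for i
    using that y S \<open>p \<in> S\<close> closure_of_subset_topspace [of "X k" "B k"] unfolding M_def
    by (auto simp: PiE_iff)
  then obtain q where "q \<in> S" and q: "\<forall>i\<in>M. q i = (p(k := y)) i"
    using full B(1) \<open>k \<in> I\<close> unfolding finitely_full_def M_def
    by (drule_tac x=M in spec, drule_tac x="p(k := y)" in spec) (auto simp: M_def)
  have "q i \<in> X i closure_of B i" if "i \<in> I" for i
  proof (cases "i \<in> M")
    case True
    have "p i \<in> B i"
      using \<open>p \<in> Pi\<^sub>E I B\<close> \<open>i \<in> I\<close> by (simp add: PiE_mem)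
    then have "p i \<in> X i closure_of B i"
      using B(2) \<open>i \<in> I\<close> by (meson closure_of_subset openin_subset subsetD)
    then show ?thesis
      using q True y by (cases "i = k") auto
  next
    case False
    then show ?thesis
      using \<open>q \<in> S\<close> S \<open>i \<in> I\<close> unfolding M_def by (auto simp: PiE_iff)
  qed
  then have "q \<in> Pi\<^sub>E I (\<lambda>i. X i closure_of B i)"
    using \<open>q \<in> S\<close> S by (auto simp: PiE_iff)
  then show ?thesis
    using that \<open>q \<in> S\<close> q unfolding M_def by simp
qed

lemma regular_space_factor_of_finitely_full:
  assumes reg: "regular_space (subtopology (product_topology X I) S)"
    and full: "finitely_full X I S" and S: "S \<subseteq> topspace (product_topology X I)"
    and "k \<in> I"
  shows "regular_space (X k)"
  unfolding T3_space_iff_regular_space [symmetric] T3_space_def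
proof (intro allI impI)
  let ?P = "product_topology X I"
  let ?S = "subtopology ?P S"
  fix x U
  assume xU: "openin (X k) U \<and> x \<in> U"
  then have "x \<in> topspace (X k)"
    by (meson openin_subset subsetD)
  then obtain p where "p \<in> S" "p k = x"
    using full \<open>k \<in> I\<close> unfolding finitely_full_def
    by (drule_tac x="{k}" in spec, drule_tac x="\<lambda>_. x" in spec) auto
  define W where "W = S \<inter> {h \<in> topspace ?P. h k \<in> U}"
  have "openin ?S W"
    unfolding W_def openin_subtopology
    using openin_continuous_map_preimage [OF continuous_map_product_projection [OF \<open>k \<in> I\<close>]] xU
    by blast
  moreover have "p \<in> W"
    using \<open>p \<in> S\<close> \<open>p k = x\<close> S xU unfolding W_def by blast
  ultimately obtain V where V: "openin ?S V" "p \<in> V" "?S closure_of V \<subseteq> W"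
    using reg unfolding T3_space_iff_regular_space [symmetric] T3_space_def by blast
  then obtain T where "openin ?P T" "V = S \<inter> T"
    by (auto simp: openin_subtopology)
  then obtain B where B: "finite {i \<in> I. B i \<noteq> topspace (X i)}" "\<forall>i\<in>I. openin (X i) (B i)"
      "p \<in> Pi\<^sub>E I B" "Pi\<^sub>E I B \<subseteq> T"
    using \<open>p \<in> V\<close> unfolding openin_product_topology_alt by blast
  have "S \<inter> Pi\<^sub>E I (\<lambda>i. X i closure_of B i) = ?S closure_of (S \<inter> Pi\<^sub>E I B)"
    using closure_of_box_in_finitely_full [OF full S B(1,2)] by simp
  also have "\<dots> \<subseteq> ?S closure_of V"
    using B(4) \<open>V = S \<inter> T\<close> by (intro closure_of_mono) blast
  finally have closure_box: "S \<inter> Pi\<^sub>E I (\<lambda>i. X i closure_of B i) \<subseteq> W"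
    using V(3) by blast
  show "\<exists>V. openin (X k) V \<and> x \<in> V \<and> X k closure_of V \<subseteq> U"
  proof (intro exI conjI subsetI)
    show "openin (X k) (B k)" "x \<in> B k"
      using B \<open>k \<in> I\<close> \<open>p k = x\<close> by auto
    fix y
    assume "y \<in> X k closure_of B k"
    then obtain q where "q \<in> S" "q \<in> Pi\<^sub>E I (\<lambda>i. X i closure_of B i)" "q k = y"
      using finitely_full_move_coordinate_in_closure [OF full S B(1,2) \<open>p \<in> S\<close> B(3) \<open>k \<in> I\<close>]
      by blast
    then show "y \<in> U"
      using closure_box unfolding W_def by blast
  qed
qed

lemma orbit_set_subset_topspace:
  assumes "korovin_mapping X f"
  shows "orbit_set f \<subseteq> topspace (product_topology (\<lambda>_. X) UNIV)"
  using assms unfolding korovin_mapping_def orbit_set_def shift_fun_def by auto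

lemma korovin_mapping_imp_finitely_full:
  fixes f :: "'g::ab_group_add \<Rightarrow> 'a"
  assumes "korovin_mapping X f"
  shows "finitely_full (\<lambda>_. X) UNIV (orbit_set f)"
  unfolding finitely_full_def
proof (intro allI impI)
  fix M and t :: "'g \<Rightarrow> 'a"
  assume M: "finite M \<and> M \<subseteq> UNIV \<and> (\<forall>i\<in>M. t i \<in> topspace X)"
  then have "restrict t M \<in> Pi\<^sub>E M (\<lambda>_. topspace X)"
    by (simp add: restrict_PiE_iff)
  also have "\<dots> = (\<lambda>h. restrict h M) ` orbit_set f"
    using assms M countable_finite unfolding korovin_mapping_def by metis
  finally obtain h where "h \<in> orbit_set f" "restrict h M = restrict t M"
    by (metis imageE)
  then show "\<exists>h\<in>orbit_set f. \<forall>i\<in>M. h i = t i"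
    by (metis restrict_apply')
qed

theorem proposition4p4:
  fixes X :: "'a topology" and f :: "'g::ab_group_add \<Rightarrow> 'a"
  assumes "\<exists>a b. a \<in> topspace X \<and> b \<in> topspace X \<and> a \<noteq> b"
    and "infinite (UNIV :: 'g set)"
    and "korovin_mapping X f"
  shows "T3_space (orbit_space X f) \<longleftrightarrow> T3_space X"
  unfolding T3_space_iff_regular_space orbit_space_def
proof
  assume "regular_space (subtopology (product_topology (\<lambda>_. X) UNIV) (orbit_set f))"
  then show "regular_space X"
    using regular_space_factor_of_finitely_full korovin_mapping_imp_finitely_full
      orbit_set_subset_topspace \<open>korovin_mapping X f\<close> UNIV_I by metis
next
  assume "regular_space X"
  then show "regular_space (subtopology (product_topology (\<lambda>_. X) UNIV) (orbit_set f))"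
    by (simp add: regular_space_product_topology regular_space_subtopology)
qed

end
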